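(* Let $k\ge 2$, $\epsilon>0$, and let $\mathbf Q\in\mathcal D_{\epsilon,E}$ have output alphabet $\{1,\dots,L\}$. Then for every $j\in\{1,\dots,L\}$, $$\sum_{i=1}^k\frac{q_{ji}^2}{q_j^2}\ \le\ k\Big(1+(e^{\epsilon}-1)^2\frac{d^\ast(k-d^\ast)}{(d^\ast e^{\epsilon}+k-d^\ast)^2}\Big).$$
   Context: A mechanism $\mathbf Q$ with input alphabet $\{1,\dots,k\}$ and finite output alphabet $\{1,\dots,L\}$ is a conditional distribution $\mathbf Q(j\mid i)$; write $q_{ji}=\mathbf Q(j\mid i)$ and $q_j=\frac1k\sum_{i=1}^k q_{ji}$. $\mathcal D_{\epsilon,E}$ is the set of such finite-output mechanisms that are $\epsilon$-locally differentially private ($q_{ji}\le e^{\epsilon}q_{ji'}$ for all $j,i,i'$) and satisfy $q_{ji}/\min_{i'\in[k]}q_{ji'}\in\{1,e^{\epsilon}\}$ for all $j\in[L]$, $i\in[k]$. Let $d^\ast\in\arg\min_{1\le d\le k-1}\frac{(de^{\epsilon}+k-d)^2}{d(k-d)}$ (ties broken arbitrarily). *)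

theory Defs
  imports Complex_Main
begin

text \<open>A mechanism with input alphabet {1..k} and output alphabet {1..L}:
  Q j i is the probability of output j given input i.\<close>
definition mechanism :: "nat \<Rightarrow> nat \<Rightarrow> (nat \<Rightarrow> nat \<Rightarrow> real) \<Rightarrow> bool" where
  "mechanism k L Q \<longleftrightarrow>
     (\<forall>j\<in>{1..L}. \<forall>i\<in>{1..k}. 0 \<le> Q j i) \<and>
     (\<forall>i\<in>{1..k}. (\<Sum>j=1..L. Q j i) = 1)"

definition D_eps_E :: "real \<Rightarrow> nat \<Rightarrow> nat \<Rightarrow> (nat \<Rightarrow> nat \<Rightarrow> real) \<Rightarrow> bool" where
  "D_eps_E \<epsilon> k L Q \<longleftrightarrow>
     mechanism k L Q \<and>
     (\<forall>j\<in>{1..L}. \<forall>i\<in>{1..k}. \<forall>i'\<in>{1..k}. Q j i \<le> exp \<epsilon> * Q j i') \<and>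
     (\<forall>j\<in>{1..L}. \<forall>i\<in>{1..k}.
        Q j i / (MIN i'\<in>{1..k}. Q j i') \<in> {1, exp \<epsilon>})"

definition q_avg :: "nat \<Rightarrow> (nat \<Rightarrow> nat \<Rightarrow> real) \<Rightarrow> nat \<Rightarrow> real" where
  "q_avg k Q j = (1 / real k) * (\<Sum>i=1..k. Q j i)"

definition dstar_obj :: "real \<Rightarrow> nat \<Rightarrow> nat \<Rightarrow> real" where
  "dstar_obj \<epsilon> k d = (real d * exp \<epsilon> + real k - real d)^2 / (real d * (real k - real d))"

definition is_dstar :: "real \<Rightarrow> nat \<Rightarrow> nat \<Rightarrow> bool" where
  "is_dstar \<epsilon> k d \<longleftrightarrow> d \<in> {1..k-1} \<and> (\<forall>d'\<in>{1..k-1}. dstar_obj \<epsilon> k d \<le> dstar_obj \<epsilon> k d')"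

end

(* In row j of a mechanism in D_eps_E every entry is either the row minimum m > 0 or m e^eps.
   If t entries take the larger value, the sum equals
   k^2 (t e^(2 eps) + k - t) / (t e^eps + k - t)^2 = k (1 + (e^eps - 1)^2 t (k - t) / (t e^eps + k - t)^2),
   and the last fraction is the reciprocal of the objective minimised by d*, so it is largest at t = d*. *)
theory Submission
  imports Defs
begin

lemma sum_two_valued:
  fixes g :: "'b \<Rightarrow> real"
  assumes "finite I" and "\<forall>i\<in>I. f i = u \<or> f i = v"
  shows "(\<Sum>i\<in>I. g (f i))
    = real (card {i\<in>I. f i = v}) * g v + (real (card I) - real (card {i\<in>I. f i = v})) * g u"
proof -
  let ?T = "{i\<in>I. f i = v}"
  have "(\<Sum>i\<in>I. g (f i)) = (\<Sum>i\<in>I. if f i = v then g v else g u)"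
    using assms(2) by (intro sum.cong) auto
  also have "\<dots> = real (card ?T) * g v + real (card (I - ?T)) * g u"
    using assms(1) by (simp add: sum.If_cases Int_def set_diff_eq conj_commute cong: conj_cong)
  also have "real (card (I - ?T)) = real (card I) - real (card ?T)"
    using assms(1) by (simp add: card_Diff_subset of_nat_diff card_mono)
  finally show ?thesis .
qed

lemma sum_sq_div_mean_sq_two_valued:
  fixes f :: "'b \<Rightarrow> real"
  assumes "finite I" and "I \<noteq> {}" and "m > 0" and "a > 0"
    and two_valued: "\<forall>i\<in>I. f i = m \<or> f i = m * a"
  defines "n \<equiv> real (card I)" and "t \<equiv> real (card {i\<in>I. f i = m * a})"
  shows "(\<Sum>i\<in>I. (f i)^2 / ((\<Sum>i\<in>I. f i) / n)^2)
    = n * (1 + (a - 1)^2 * (t * (n - t)) / (t * a + n - t)^2)"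
proof -
  have "t \<le> n"
    unfolding t_def n_def using assms(1) by (simp add: card_mono)
  moreover have "n > 0"
    unfolding n_def using assms(1,2) by (simp add: card_gt_0_iff)
  moreover have "t * a \<ge> 0"
    unfolding t_def using \<open>a > 0\<close> by simp
  ultimately have denom_pos: "t * a + n - t > 0"
    using \<open>a > 0\<close> by (cases "t = n") auto
  have sum: "(\<Sum>i\<in>I. f i) = m * (t * a + n - t)"
    using sum_two_valued[OF assms(1) two_valued, of "\<lambda>x. x"]
    unfolding n_def t_def by (simp add: algebra_simps)
  have sum_sq: "(\<Sum>i\<in>I. (f i)^2) = m^2 * (t * a^2 + n - t)"
    using sum_two_valued[OF assms(1) two_valued, of "\<lambda>x. x^2"]
    unfolding n_def t_def by (simp add: algebra_simps power_mult_distrib)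
  have "(\<Sum>i\<in>I. (f i)^2 / ((\<Sum>i\<in>I. f i) / n)^2)
      = (\<Sum>i\<in>I. (f i)^2) / ((\<Sum>i\<in>I. f i) / n)^2"
    by (simp add: sum_divide_distrib)
  also have "\<dots> = n * (n * (t * a^2 + n - t)) / (t * a + n - t)^2"
    unfolding sum sum_sq using \<open>m > 0\<close> \<open>n > 0\<close> denom_pos
    by (simp add: power_divide power_mult_distrib power2_eq_square)
  also have "n * (t * a^2 + n - t) = (t * a + n - t)^2 + (a - 1)^2 * (t * (n - t))"
    by (simp add: power2_eq_square algebra_simps)
  finally show ?thesis
    using denom_pos by (simp add: field_simps)
qed

lemma D_eps_E_row_two_valued:
  assumes "D_eps_E \<epsilon> k L Q" and "j \<in> {1..L}" and "k \<ge> 1"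
  obtains m where "m > 0" and "\<forall>i\<in>{1..k}. Q j i = m \<or> Q j i = m * exp \<epsilon>"
proof
  define m where "m = (MIN i\<in>{1..k}. Q j i)"
  have ratio: "Q j i / m \<in> {1, exp \<epsilon>}" if "i \<in> {1..k}" for i
    using assms(1,2) that unfolding D_eps_E_def m_def by blast
  have "m \<in> Q j ` {1..k}"
    unfolding m_def using \<open>k \<ge> 1\<close> by (intro Min_in) auto
  then obtain i0 where "i0 \<in> {1..k}" and "m = Q j i0"
    by blast
  then have "m \<ge> 0"
    using assms(1,2) unfolding D_eps_E_def mechanism_def by blast
  moreover have "m \<noteq> 0"
    using ratio[OF \<open>i0 \<in> {1..k}\<close>] by auto
  ultimately show "m > 0" by simp
  then show "\<forall>i\<in>{1..k}. Q j i = m \<or> Q j i = m * exp \<epsilon>"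
    using ratio by (fastforce simp: field_simps)
qed

lemma inverse_dstar_obj_le:
  assumes "is_dstar \<epsilon> k d" and "t \<le> k"
  shows "inverse (dstar_obj \<epsilon> k t) \<le> inverse (dstar_obj \<epsilon> k d)"
proof -
  have d: "1 \<le> d" "d < k" and d_min: "\<forall>d'\<in>{1..k-1}. dstar_obj \<epsilon> k d \<le> dstar_obj \<epsilon> k d'"
    using assms(1) unfolding is_dstar_def by auto
  have "real d * exp \<epsilon> \<ge> 0"
    by simp
  then have "real d * exp \<epsilon> + real k - real d > 0"
    using d by linarith
  then have obj_d_pos: "dstar_obj \<epsilon> k d > 0"
    using d unfolding dstar_obj_def by simp
  show ?thesis
  proof (cases "0 < t \<and> t < k")
    case True
    then have "dstar_obj \<epsilon> k d \<le> dstar_obj \<epsilon> k t"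
      using d_min by auto
    then show ?thesis
      using obj_d_pos by (rule le_imp_inverse_le)
  next
    case False
    \<comment> \<open>t = 0 or t = k: the denominator of dstar_obj vanishes, so dstar_obj and its inverse are 0\<close>
    then have "dstar_obj \<epsilon> k t = 0"
      using \<open>t \<le> k\<close> unfolding dstar_obj_def by auto
    then show ?thesis
      using obj_d_pos by simp
  qed
qed

theorem lemma1:
  fixes k L d :: nat and \<epsilon> :: real and Q :: "nat \<Rightarrow> nat \<Rightarrow> real"
  assumes "k \<ge> 2" and "\<epsilon> > 0" and "D_eps_E \<epsilon> k L Q" and "is_dstar \<epsilon> k d"
    and "j \<in> {1..L}"
  shows "(\<Sum>i=1..k. (Q j i)^2 / (q_avg k Q j)^2)
    \<le> real k * (1 + (exp \<epsilon> - 1)^2 * (real d * (real k - real d)) / (real d * exp \<epsilon> + real k - real d)^2)"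
proof -
  obtain m where "m > 0" and row: "\<forall>i\<in>{1..k}. Q j i = m \<or> Q j i = m * exp \<epsilon>"
    using D_eps_E_row_two_valued[OF assms(3,5)] \<open>k \<ge> 2\<close> by auto
  define t where "t = card {i\<in>{1..k}. Q j i = m * exp \<epsilon>}"
  have "t \<le> card {1..k}"
    unfolding t_def by (rule card_mono) auto
  then have "t \<le> k"
    by simp
  have "q_avg k Q j = (\<Sum>i=1..k. Q j i) / real k"
    unfolding q_avg_def by simp
  moreover have "(\<Sum>i=1..k. (Q j i)^2 / ((\<Sum>i=1..k. Q j i) / real k)^2)
      = real k * (1 + (exp \<epsilon> - 1)^2 * (real t * (real k - real t))
          / (real t * exp \<epsilon> + real k - real t)^2)"
    using sum_sq_div_mean_sq_two_valued[of "{1..k}" m "exp \<epsilon>" "Q j"] \<open>m > 0\<close> row \<open>k \<ge> 2\<close>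
    unfolding t_def by simp
  ultimately have "(\<Sum>i=1..k. (Q j i)^2 / (q_avg k Q j)^2)
      = real k * (1 + (exp \<epsilon> - 1)^2 * inverse (dstar_obj \<epsilon> k t))"
    unfolding dstar_obj_def inverse_divide by simp
  also have "\<dots> \<le> real k * (1 + (exp \<epsilon> - 1)^2 * inverse (dstar_obj \<epsilon> k d))"
    using inverse_dstar_obj_le[OF assms(4) \<open>t \<le> k\<close>] by (simp add: mult_left_mono)
  finally show ?thesis
    unfolding dstar_obj_def inverse_divide by simp
qed

end
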